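(* Let $H$ be an admissible Hamiltonian with vector field $f$ and Hessian $\mathcal H$, and let $g=J\nabla K$ be associated to $f$ via $B$, with $\mathcal K=\nabla^2K=B\mathcal H$. Then for all $x$: $$g'(x)g(x)=f'(x)f(x),\qquad (g'(x))^2=(f'(x))^2,$$ $$J(x)\mathcal H\,J(x)\mathcal K=J(x)\mathcal K\,J(x)\mathcal H,\qquad (J(x)\mathcal H)^2=(J(x)\mathcal K)^2,\qquad (\mathcal HJ(x))^2=(\mathcal KJ(x))^2.$$
   Context: Fix an integer $n\ge 2$. Points of $\mathbb R^{2n}$ are $x=(x_1,\dots,x_{2n})^{T}$; write $u=(x_1,\dots,x_n)^T$. Let $X(u)$ be the $n\times n$ matrix with entries $X(u)_{ij}=x_{k}$ where $k\in\{1,\dots,n\}$, $k\equiv i+j-1 \pmod n$, and let $J(x)=\begin{pmatrix}0&X(u)\\-X(u)&0\end{pmatrix}$. Let $\mathcal P$ be the $n\times n$ cyclic shift matrix ($\mathcal P_{i,i+1}=1$ for $1\le i\le n-1$, $\mathcal P_{n,1}=1$, all other entries $0$) and $A=\begin{pmatrix}\mathcal P&0\\0&\mathcal P\end{pmatrix}$. An admissible Hamiltonian is a homogeneous quadratic form $H(x)=\tfrac12 x^T\mathcal H x$ with a constant symmetric matrix $\mathcal H=\nabla^2H$ satisfying $A\mathcal H=\mathcal H A^T$; its Hamiltonian vector field is $f(x)=J(x)\nabla H(x)$ and $f'(x)$ denotes the Jacobi matrix of $f$. Associated vector fields: let $B=\sum_{i=0}^{n-1}\alpha_iA^i$ with $\alpha_i\in\mathbb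 C$ and $B^2=I$. If $H$ is an admissible Hamiltonian with vector field $f$, put $K(x)=\tfrac12 x^T B\mathcal H x$ (so $\nabla K=B\nabla H$) and $g(x)=J(x)\nabla K(x)=B^Tf(x)$; $g$ is said to be associated to $f$ via $B$. *)

theory Defs
  imports "HOL-Analysis.Analysis" "Jordan_Normal_Form.Matrix"
begin

text \<open>All indices are 0-based (JNF convention): entry (i,j) of the paper is (i-1,j-1) here.\<close>

definition cshift :: "nat \<Rightarrow> 'a::{zero,one} mat" where
  "cshift n = mat n n (\<lambda>(i,j). if j = (i + 1) mod n then 1 else 0)"

definition Amat :: "nat \<Rightarrow> 'a::{zero,one} mat" where
  "Amat n = four_block_mat (cshift n) (0\<^sub>m n n) (0\<^sub>m n n) (cshift n)"

text \<open>X(u)_{ij} = x_k with k = i+j-1 mod n (1-based), i.e. x_{(i+j) mod n} 0-based.\<close>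
definition Xmat :: "nat \<Rightarrow> 'a vec \<Rightarrow> 'a mat" where
  "Xmat n x = mat n n (\<lambda>(i,j). x $ ((i + j) mod n))"

definition Jmat :: "nat \<Rightarrow> 'a::{zero,uminus} vec \<Rightarrow> 'a mat" where
  "Jmat n x = four_block_mat (0\<^sub>m n n) (Xmat n x) (map_mat uminus (Xmat n x)) (0\<^sub>m n n)"

definition admissible :: "nat \<Rightarrow> real mat \<Rightarrow> bool" where
  "admissible n HH \<longleftrightarrow> HH \<in> carrier_mat (2*n) (2*n) \<and> transpose_mat HH = HH \<and>
     Amat n * HH = HH * transpose_mat (Amat n)"

definition Bmat :: "nat \<Rightarrow> (nat \<Rightarrow> complex) \<Rightarrow> complex mat" where
  "Bmat n \<alpha> = mat (2*n) (2*n) (\<lambda>(i,j). \<Sum>k<n. \<alpha> k * (Amat n ^\<^sub>m k) $$ (i,j))"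

definition cvec :: "real vec \<Rightarrow> complex vec" where
  "cvec x = map_vec complex_of_real x"

definition cmat :: "real mat \<Rightarrow> complex mat" where
  "cmat M = map_mat complex_of_real M"

text \<open>Vector field J(x) * (M x) where M x is the gradient of the quadratic form (1/2) x^T M x.\<close>
definition hamvf :: "nat \<Rightarrow> complex mat \<Rightarrow> real vec \<Rightarrow> complex vec" where
  "hamvf n M x = Jmat n (cvec x) *\<^sub>v (M *\<^sub>v cvec x)"

definition jacobian :: "nat \<Rightarrow> (real vec \<Rightarrow> complex vec) \<Rightarrow> real vec \<Rightarrow> complex mat" where
  "jacobian m F x = mat m m (\<lambda>(i,j).
     vector_derivative (\<lambda>t::real. F (x + t \<cdot>\<^sub>v unit_vec m j) $ i) (at 0))"

end

theory Submission
  imports Defs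
begin

text \<open>
  Both A and J(x) are assembled from the cyclic shift P and the Hankel matrix X(u), and
  X(u) P = P^T X(u) = X(P^T u). Hence J(x) A = A^T J(x) and J(A^T x) = A^T J(x); together with
  A H = H A^T, all these intertwinings pass to every polynomial B in A. The Jacobian of
  f = J grad H is f'(x) = J(x) H + D(H x), where D(z) (Jmat_dual) is the matrix of v |-> J(v) z, and the
  intertwinings give g = B^T f, g' = B^T f', and f' commutes with B^T. Since (B^T)^2 = I, the
  factor B^T cancels in g' g and in (g')^2; the identities for J K = B^T J H and K J = B H J
  follow in the same way.
\<close>

lemma cshift_carrier [simp]: "cshift n \<in> carrier_mat n n"
  by (simp add: cshift_def)

lemma cshift_dims [simp]: "dim_row (cshift n) = n" "dim_col (cshift n) = n"
  by (simp_all add: cshift_def)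

lemma Amat_carrier [simp]: "Amat n \<in> carrier_mat (2*n) (2*n)"
  unfolding Amat_def mult_2 by (rule four_block_carrier_mat) auto

lemma Amat_dims [simp]: "dim_row (Amat n) = 2*n" "dim_col (Amat n) = 2*n"
  using Amat_carrier[of n] by (auto simp del: Amat_carrier)

lemma Jmat_carrier [simp]: "Jmat n v \<in> carrier_mat (2*n) (2*n)"
  unfolding Jmat_def mult_2 by (rule four_block_carrier_mat) (auto simp: Xmat_def)

lemma Jmat_dims [simp]: "dim_row (Jmat n v) = 2*n" "dim_col (Jmat n v) = 2*n"
  using Jmat_carrier[of n v] by (auto simp del: Jmat_carrier)

lemma mult_carrier_mat_square [simp]:
  "A \<in> carrier_mat m m \<Longrightarrow> B \<in> carrier_mat m m \<Longrightarrow> A * B \<in> carrier_mat m m"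
  by (rule mult_carrier_mat)

lemma cmat_carrier_iff: "cmat A \<in> carrier_mat r c \<longleftrightarrow> A \<in> carrier_mat r c"
  unfolding carrier_mat_def cmat_def by simp

lemma cmat_mult:
  assumes "A \<in> carrier_mat a b" and "B \<in> carrier_mat b c"
  shows "cmat (A * B) = cmat A * cmat B"
  unfolding cmat_def by (rule of_real_hom.mat_hom_mult[OF assms])

lemma cmat_transpose: "cmat (transpose_mat A) = transpose_mat (cmat A)"
  unfolding cmat_def by (rule eq_matI) simp_all

lemma cmat_four_block_mat:
  assumes "A \<in> carrier_mat n n" "B \<in> carrier_mat n n" "C \<in> carrier_mat n n" "D \<in> carrier_mat n n"
  shows "cmat (four_block_mat A B C D) = four_block_mat (cmat A) (cmat B) (cmat C) (cmat D)"
  using assms unfolding cmat_def by (intro eq_matI) auto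

lemma cmat_cshift: "cmat (cshift n) = cshift n"
  by (rule eq_matI) (simp_all add: cmat_def cshift_def)

lemma cmat_zero_mat: "cmat (0\<^sub>m n n) = 0\<^sub>m n n"
  by (rule eq_matI) (simp_all add: cmat_def)

lemma cmat_Amat: "cmat (Amat n) = Amat n"
  unfolding Amat_def
  by (subst cmat_four_block_mat[where n=n]) (simp_all only: cshift_carrier zero_carrier_mat cmat_cshift cmat_zero_mat)

lemma cvec_carrier [simp]: "x \<in> carrier_vec m \<Longrightarrow> cvec x \<in> carrier_vec m"
  by (simp add: cvec_def)

lemma cvec_add_smult_unit_vec:
  "x \<in> carrier_vec m \<Longrightarrow> j < m \<Longrightarrow>
   cvec (x + t \<cdot>\<^sub>v unit_vec m j) = cvec x + complex_of_real t \<cdot>\<^sub>v unit_vec m j"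
  by (rule eq_vecI) (auto simp: cvec_def)


section \<open>The shift matrix and Hankel matrices\<close>

definition hankel_mat :: "nat \<Rightarrow> (nat \<Rightarrow> 'a) \<Rightarrow> 'a mat" where
  "hankel_mat n h = mat n n (\<lambda>(i,j). h ((i+j) mod n))"

lemma hankel_mat_carrier [simp]: "hankel_mat n h \<in> carrier_mat n n"
  by (simp add: hankel_mat_def)

lemma hankel_mat_dims [simp]: "dim_row (hankel_mat n h) = n" "dim_col (hankel_mat n h) = n"
  by (simp_all add: hankel_mat_def)

lemma hankel_mat_cong: "(\<And>k. k < n \<Longrightarrow> h k = h' k) \<Longrightarrow> hankel_mat n h = hankel_mat n h'"
  by (rule eq_matI) (auto simp: hankel_mat_def)

lemma Jmat_hankel:
  "Jmat n v = four_block_mat (0\<^sub>m n n) (hankel_mat n (\<lambda>k. v$k)) (hankel_mat n (\<lambda>k. - v$k)) (0\<^sub>m n n)"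
proof -
  have "map_mat uminus (hankel_mat n (\<lambda>k. v$k)) = hankel_mat n (\<lambda>k. - v$k)"
    by (rule eq_matI) (simp_all add: hankel_mat_def)
  then show ?thesis
    unfolding Jmat_def by (simp add: Xmat_def hankel_mat_def)
qed

lemma transpose_Amat:
  "transpose_mat (Amat n) =
   four_block_mat (transpose_mat (cshift n)) (0\<^sub>m n n) (0\<^sub>m n n) (transpose_mat (cshift n))"
  unfolding Amat_def
  by (subst transpose_four_block_mat[where ?nr1.0=n and ?nc1.0=n and ?nr2.0=n and ?nc2.0=n]) simp_all

lemma eq_Suc_mod_iff:
  assumes "0 < (n::nat)" "k < n" "j < n"
  shows "j = (k+1) mod n \<longleftrightarrow> k = (j+n-1) mod n"
proof (cases "j = 0")
  case True
  then show ?thesis using assms by (cases "k + 1 = n") (auto simp: mod_if)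
next
  case False
  then have "(j+n-1) mod n = j - 1" using assms by (simp add: mod_if)
  then show ?thesis using assms False by (auto simp: mod_if)
qed

lemma add_pred_mod: "0 < (n::nat) \<Longrightarrow> (a + n - 1) mod n = (a mod n + n - 1) mod n"
proof -
  assume "0 < n"
  then have "a + n - 1 = a + (n-1)" "a mod n + n - 1 = a mod n + (n-1)" by auto
  then show ?thesis by (simp add: mod_add_left_eq)
qed

lemma hankel_mult_cshift:
  assumes n: "0 < n"
  shows "hankel_mat n h * (cshift n :: 'a::comm_ring_1 mat) = hankel_mat n (\<lambda>k. h ((k+n-1) mod n))"
proof (rule eq_matI)
  fix i j assume "i < dim_row (hankel_mat n (\<lambda>k. h ((k+n-1) mod n)))"
    and "j < dim_col (hankel_mat n (\<lambda>k. h ((k+n-1) mod n)))"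
  hence i: "i < n" and j: "j < n" by simp_all
  have "(hankel_mat n h * cshift n) $$ (i,j) =
        (\<Sum>k<n. h ((i+k) mod n) * (if j = (k+1) mod n then 1 else 0))"
    using i j by (simp add: hankel_mat_def cshift_def scalar_prod_def lessThan_atLeast0)
  also have "\<dots> = (\<Sum>k<n. if k = (j+n-1) mod n then h ((i+k) mod n) else 0)"
    by (rule sum.cong, simp, use eq_Suc_mod_iff[OF n] j in auto)
  also have "\<dots> = h ((i + (j+n-1) mod n) mod n)" using n by simp
  also have "(i + (j+n-1) mod n) mod n = (i + (j+n-1)) mod n" by (rule mod_add_right_eq)
  also have "i + (j+n-1) = (i+j) + n - 1" using n by simp
  also have "((i+j) + n - 1) mod n = ((i+j) mod n + n - 1) mod n" using n by (rule add_pred_mod)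
  finally show "(hankel_mat n h * cshift n) $$ (i,j) = hankel_mat n (\<lambda>k. h ((k+n-1) mod n)) $$ (i,j)"
    using i j by (simp add: hankel_mat_def)
qed simp_all

lemma transpose_cshift_mult_hankel:
  assumes n: "0 < n"
  shows "transpose_mat (cshift n :: 'a::comm_ring_1 mat) * hankel_mat n h =
         hankel_mat n (\<lambda>k. h ((k+n-1) mod n))"
proof (rule eq_matI)
  fix i j assume "i < dim_row (hankel_mat n (\<lambda>k. h ((k+n-1) mod n)))"
    and "j < dim_col (hankel_mat n (\<lambda>k. h ((k+n-1) mod n)))"
  hence i: "i < n" and j: "j < n" by simp_all
  have "(transpose_mat (cshift n) * hankel_mat n h) $$ (i,j) =
        (\<Sum>k<n. (if i = (k+1) mod n then 1 else 0) * h ((k+j) mod n))"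
    using i j by (simp add: hankel_mat_def cshift_def scalar_prod_def lessThan_atLeast0)
  also have "\<dots> = (\<Sum>k<n. if k = (i+n-1) mod n then h ((k+j) mod n) else 0)"
    by (rule sum.cong, simp, use eq_Suc_mod_iff[OF n] i in auto)
  also have "\<dots> = h (((i+n-1) mod n + j) mod n)" using n by simp
  also have "((i+n-1) mod n + j) mod n = (i+n-1 + j) mod n" by (rule mod_add_left_eq)
  also have "i+n-1 + j = (i+j) + n - 1" using n by simp
  also have "((i+j) + n - 1) mod n = ((i+j) mod n + n - 1) mod n" using n by (rule add_pred_mod)
  finally show "(transpose_mat (cshift n) * hankel_mat n h) $$ (i,j) =
                hankel_mat n (\<lambda>k. h ((k+n-1) mod n)) $$ (i,j)"
    using i j by (simp add: hankel_mat_def)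
qed simp_all

lemma Jmat_mult_Amat:
  assumes n: "0 < n"
  shows "Jmat n (v :: 'a::comm_ring_1 vec) * Amat n = transpose_mat (Amat n) * Jmat n v"
proof -
  let ?X = "hankel_mat n (\<lambda>k. v$k)" and ?Y = "hankel_mat n (\<lambda>k. - v$k)"
    and ?P = "cshift n :: 'a mat" and ?O = "0\<^sub>m n n :: 'a mat"
  have "Jmat n v * Amat n = four_block_mat (?O * ?P + ?X * ?O) (?O * ?O + ?X * ?P)
     (?Y * ?P + ?O * ?O) (?Y * ?O + ?O * ?P)"
    unfolding Jmat_hankel Amat_def
    by (rule mult_four_block_mat[where ?nr1.0=n and ?n1.0=n and ?n2.0=n and ?nr2.0=n and ?nc1.0=n and ?nc2.0=n]) simp_all
  also have "\<dots> = four_block_mat ?O (?X * ?P) (?Y * ?P) ?O"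
    by (simp add: mult_carrier_mat[of _ n n _ n])
  also have "\<dots> = four_block_mat ?O (transpose_mat ?P * ?X) (transpose_mat ?P * ?Y) ?O"
    using n by (simp only: transpose_cshift_mult_hankel hankel_mult_cshift)
  also have "\<dots> = four_block_mat (transpose_mat ?P * ?O + ?O * ?Y) (transpose_mat ?P * ?X + ?O * ?O)
     (?O * ?O + transpose_mat ?P * ?Y) (?O * ?X + transpose_mat ?P * ?O)"
    by (simp add: mult_carrier_mat[of _ n n _ n])
  also have "\<dots> = transpose_mat (Amat n) * Jmat n v"
    unfolding Jmat_hankel transpose_Amat
    by (rule mult_four_block_mat[where ?nr1.0=n and ?n1.0=n and ?n2.0=n and ?nr2.0=n and ?nc1.0=n and ?nc2.0=n, symmetric]) simp_all
  finally show ?thesis .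
qed

lemma transpose_Amat_mult_vec:
  assumes n: "0 < n" and v: "v \<in> carrier_vec (2*n)" and k: "k < n"
  shows "(transpose_mat (Amat n) *\<^sub>v (v :: 'a::comm_ring_1 vec)) $ k = v $ ((k+n-1) mod n)"
proof -
  have p: "(k+n-1) mod n < 2*n" using mod_less_divisor[OF n, of "k+n-1"] by simp
  have "(transpose_mat (Amat n) *\<^sub>v v) $ k = (\<Sum>l<2*n. (Amat n :: 'a mat) $$ (l,k) * v $ l)"
    using k v by (simp add: scalar_prod_def lessThan_atLeast0)
  also have "\<dots> = (\<Sum>l<2*n. if l = (k+n-1) mod n then v $ l else 0)"
  proof (rule sum.cong[OF refl])
    fix l assume "l \<in> {..<2*n}"
    then have l: "l < 2*n" by simp
    have "(Amat n :: 'a mat) $$ (l,k) = (if l < n \<and> k = (l+1) mod n then 1 else 0)"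
      using l k by (simp add: Amat_def cshift_def mult_2)
    then show "(Amat n :: 'a mat) $$ (l,k) * v $ l = (if l = (k+n-1) mod n then v $ l else 0)"
      using eq_Suc_mod_iff[OF n _ k, of l] mod_less_divisor[OF n, of "k+n-1"] by auto
  qed
  also have "\<dots> = v $ ((k+n-1) mod n)" using p by (simp add: sum.delta')
  finally show ?thesis .
qed

lemma Jmat_transpose_Amat_mult_vec:
  assumes n: "0 < n" and v: "v \<in> carrier_vec (2*n)"
  shows "Jmat n (transpose_mat (Amat n) *\<^sub>v (v :: 'a::comm_ring_1 vec)) = transpose_mat (Amat n) * Jmat n v"
proof -
  let ?X = "hankel_mat n (\<lambda>k. v$k)" and ?Y = "hankel_mat n (\<lambda>k. - v$k)"
    and ?P = "cshift n :: 'a mat" and ?O = "0\<^sub>m n n :: 'a mat"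
  have "transpose_mat (Amat n) * Jmat n v = four_block_mat (transpose_mat ?P * ?O + ?O * ?Y)
     (transpose_mat ?P * ?X + ?O * ?O) (?O * ?O + transpose_mat ?P * ?Y) (?O * ?X + transpose_mat ?P * ?O)"
    unfolding Jmat_hankel transpose_Amat
    by (rule mult_four_block_mat[where ?nr1.0=n and ?n1.0=n and ?n2.0=n and ?nr2.0=n and ?nc1.0=n and ?nc2.0=n]) simp_all
  also have "\<dots> = four_block_mat ?O (transpose_mat ?P * ?X) (transpose_mat ?P * ?Y) ?O"
    by (simp add: mult_carrier_mat[of _ n n _ n])
  also have "\<dots> = four_block_mat ?O (hankel_mat n (\<lambda>k. v $ ((k+n-1) mod n)))
     (hankel_mat n (\<lambda>k. - v $ ((k+n-1) mod n))) ?O"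
    using n by (simp only: transpose_cshift_mult_hankel)
  also have "\<dots> = Jmat n (transpose_mat (Amat n) *\<^sub>v v)"
    unfolding Jmat_hankel using transpose_Amat_mult_vec[OF n v]
    by (intro cong_four_block_mat refl hankel_mat_cong) auto
  finally show ?thesis by simp
qed


section \<open>Polynomials in a matrix\<close>

definition mat_poly :: "nat \<Rightarrow> (nat \<Rightarrow> 'a) \<Rightarrow> 'a::semiring_1 mat \<Rightarrow> nat \<Rightarrow> 'a mat" where
  "mat_poly m \<alpha> Q r = mat m m (\<lambda>(i,j). \<Sum>k<r. \<alpha> k * (Q ^\<^sub>m k) $$ (i,j))"

lemma mat_poly_carrier [simp]: "mat_poly m \<alpha> Q r \<in> carrier_mat m m"
  by (simp add: mat_poly_def)

lemma mat_poly_dims [simp]: "dim_row (mat_poly m \<alpha> Q r) = m" "dim_col (mat_poly m \<alpha> Q r) = m"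
  by (simp_all add: mat_poly_def)

lemma Bmat_eq_mat_poly: "Bmat n \<alpha> = mat_poly (2*n) \<alpha> (Amat n) n"
  by (simp add: Bmat_def mat_poly_def)

lemma Bmat_carrier [simp]: "Bmat n \<alpha> \<in> carrier_mat (2*n) (2*n)"
  by (simp add: Bmat_def)

lemma pow_mat_intertwine:
  assumes C: "C \<in> carrier_mat m m" and Q: "Q \<in> carrier_mat m m" and Q': "Q' \<in> carrier_mat m m"
    and CQ: "C * Q = Q' * (C :: 'a::comm_ring_1 mat)"
  shows "C * Q ^\<^sub>m k = Q' ^\<^sub>m k * C"
proof (induction k)
  case 0
  then show ?case using C Q Q' by simp
next
  case (Suc k)
  have "C * Q ^\<^sub>m Suc k = (C * Q ^\<^sub>m k) * Q" using C Q by (simp add: assoc_mult_mat[of _ m m _ m _ m])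
  also have "\<dots> = Q' ^\<^sub>m k * (C * Q)" using C Q Q' Suc by (simp add: assoc_mult_mat[of _ m m _ m _ m])
  also have "\<dots> = (Q' ^\<^sub>m k * Q') * C" unfolding CQ using C Q Q' by (simp add: assoc_mult_mat[of _ m m _ m _ m])
  finally show ?case by simp
qed

lemma transpose_pow_mat:
  assumes Q: "Q \<in> carrier_mat m m"
  shows "transpose_mat (Q ^\<^sub>m k) = (transpose_mat Q :: 'a::comm_ring_1 mat) ^\<^sub>m k"
proof (induction k)
  case 0
  then show ?case using Q by simp
next
  case (Suc k)
  have "transpose_mat (Q ^\<^sub>m Suc k) = transpose_mat Q * transpose_mat Q ^\<^sub>m k"
    using Q by (simp add: transpose_mult[of _ m m _ m] Suc)
  also have "\<dots> = transpose_mat Q ^\<^sub>m k * transpose_mat Q"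
    using Q by (intro pow_mat_intertwine) auto
  finally show ?case by simp
qed

lemma transpose_mat_poly:
  assumes Q: "Q \<in> carrier_mat m m"
  shows "transpose_mat (mat_poly m \<alpha> Q r) = mat_poly m \<alpha> (transpose_mat Q :: 'a::comm_ring_1 mat) r"
  by (rule eq_matI) (use Q in \<open>simp_all add: mat_poly_def transpose_pow_mat[OF Q, symmetric]\<close>)

lemma mat_poly_intertwine:
  assumes C: "C \<in> carrier_mat m m" and Q: "Q \<in> carrier_mat m m" and Q': "Q' \<in> carrier_mat m m"
    and CQ: "C * Q = Q' * (C :: 'a::comm_ring_1 mat)"
  shows "C * mat_poly m \<alpha> Q r = mat_poly m \<alpha> Q' r * C"
proof (rule eq_matI)
  fix i j assume "i < dim_row (mat_poly m \<alpha> Q' r * C)" "j < dim_col (mat_poly m \<alpha> Q' r * C)"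
  hence i: "i < m" and j: "j < m" using C by auto
  have "(C * mat_poly m \<alpha> Q r) $$ (i,j) = (\<Sum>l<m. C $$ (i,l) * (\<Sum>k<r. \<alpha> k * (Q ^\<^sub>m k) $$ (l,j)))"
    using i j C by (simp add: mat_poly_def scalar_prod_def lessThan_atLeast0)
  also have "\<dots> = (\<Sum>k<r. \<alpha> k * (\<Sum>l<m. C $$ (i,l) * (Q ^\<^sub>m k) $$ (l,j)))"
    by (simp add: sum_distrib_left algebra_simps sum.swap[of _ "{..<m}" "{..<r}"])
  also have "\<dots> = (\<Sum>k<r. \<alpha> k * (C * Q ^\<^sub>m k) $$ (i,j))"
    using i j C Q by (simp add: scalar_prod_def lessThan_atLeast0)
  also have "\<dots> = (\<Sum>k<r. \<alpha> k * (Q' ^\<^sub>m k * C) $$ (i,j))"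
    using pow_mat_intertwine[OF C Q Q' CQ] by simp
  also have "\<dots> = (\<Sum>k<r. \<alpha> k * (\<Sum>l<m. (Q' ^\<^sub>m k) $$ (i,l) * C $$ (l,j)))"
    using i j C Q' by (simp add: scalar_prod_def lessThan_atLeast0)
  also have "\<dots> = (\<Sum>l<m. (\<Sum>k<r. \<alpha> k * (Q' ^\<^sub>m k) $$ (i,l)) * C $$ (l,j))"
    by (simp add: sum_distrib_left sum_distrib_right algebra_simps sum.swap[of _ "{..<m}" "{..<r}"])
  also have "\<dots> = (mat_poly m \<alpha> Q' r * C) $$ (i,j)"
    using i j C by (simp add: mat_poly_def scalar_prod_def lessThan_atLeast0)
  finally show "(C * mat_poly m \<alpha> Q r) $$ (i,j) = (mat_poly m \<alpha> Q' r * C) $$ (i,j)" .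
qed (use C in auto)


section \<open>The Jacobian of a quadratic Hamiltonian vector field\<close>

lemma Jmat_entry:
  assumes "i < 2*n" "k < 2*n"
  shows "Jmat n v $$ (i,k) =
    (if (i < n) = (k < n) then 0
     else if i < n then v $ ((i+k-n) mod n) else - v $ ((i+k-n) mod n))"
  using assms by (auto simp: Jmat_def Xmat_def mult_2)

lemma Jmat_add_smult_entry:
  assumes "i < 2*n" "k < 2*n" "a \<in> carrier_vec (2*n)" "b \<in> carrier_vec (2*n)"
  shows "Jmat n (a + c \<cdot>\<^sub>v b) $$ (i,k) = Jmat n a $$ (i,k) + c * Jmat n (b::'a::comm_ring_1 vec) $$ (i,k)"
proof -
  have "0 < n" using assms by auto
  have index: "\<And>p. p < n \<Longrightarrow> (a + c \<cdot>\<^sub>v b) $ p = a $ p + c * b $ p" using assms by auto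
  show ?thesis using assms \<open>0 < n\<close> by (simp add: Jmat_entry index)
qed

lemma Jmat_add_smult_mult_vec:
  assumes "a \<in> carrier_vec (2*n)" "b \<in> carrier_vec (2*n)" "w \<in> carrier_vec (2*n)"
  shows "Jmat n (a + c \<cdot>\<^sub>v b) *\<^sub>v w = Jmat n a *\<^sub>v w + c \<cdot>\<^sub>v (Jmat n (b::'a::comm_ring_1 vec) *\<^sub>v w)"
proof (rule eq_vecI)
  fix i assume "i < dim_vec (Jmat n a *\<^sub>v w + c \<cdot>\<^sub>v (Jmat n b *\<^sub>v w))"
  hence i: "i < 2*n" by simp
  have "(Jmat n (a + c \<cdot>\<^sub>v b) *\<^sub>v w) $ i = (\<Sum>k<2*n. (Jmat n a $$ (i,k) + c * Jmat n b $$ (i,k)) * w $ k)"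
    using i assms by (simp add: scalar_prod_def lessThan_atLeast0 Jmat_add_smult_entry)
  also have "\<dots> = (\<Sum>k<2*n. Jmat n a $$ (i,k) * w $ k) + c * (\<Sum>k<2*n. Jmat n b $$ (i,k) * w $ k)"
    by (simp add: algebra_simps sum.distrib sum_distrib_left)
  also have "\<dots> = (Jmat n a *\<^sub>v w + c \<cdot>\<^sub>v (Jmat n b *\<^sub>v w)) $ i"
    using i assms by (simp add: scalar_prod_def lessThan_atLeast0)
  finally show "(Jmat n (a + c \<cdot>\<^sub>v b) *\<^sub>v w) $ i = (Jmat n a *\<^sub>v w + c \<cdot>\<^sub>v (Jmat n b *\<^sub>v w)) $ i" .
qed simp

lemma hamvf_add_smult_unit_vec:
  assumes x: "x \<in> carrier_vec (2*n)" and M: "M \<in> carrier_mat (2*n) (2*n)" and j: "j < 2*n" and i: "i < 2*n"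
  defines "a \<equiv> cvec x" and "b \<equiv> unit_vec (2*n) j :: complex vec"
  shows "hamvf n M (x + t \<cdot>\<^sub>v unit_vec (2*n) j) $ i =
     (Jmat n a *\<^sub>v (M *\<^sub>v a)) $ i
     + complex_of_real t * ((Jmat n a *\<^sub>v (M *\<^sub>v b)) $ i + (Jmat n b *\<^sub>v (M *\<^sub>v a)) $ i)
     + (complex_of_real t)^2 * (Jmat n b *\<^sub>v (M *\<^sub>v b)) $ i"
proof -
  let ?c = "complex_of_real t"
  have a: "a \<in> carrier_vec (2*n)" and b: "b \<in> carrier_vec (2*n)" using x by (auto simp: a_def b_def)
  have "hamvf n M (x + t \<cdot>\<^sub>v unit_vec (2*n) j) = Jmat n (a + ?c \<cdot>\<^sub>v b) *\<^sub>v (M *\<^sub>v a + ?c \<cdot>\<^sub>v (M *\<^sub>v b))"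
    unfolding hamvf_def cvec_add_smult_unit_vec[OF x j] a_def[symmetric] b_def[symmetric]
    using a b M by (simp add: mult_add_distrib_mat_vec mult_mat_vec)
  also have "\<dots> = Jmat n a *\<^sub>v (M *\<^sub>v a + ?c \<cdot>\<^sub>v (M *\<^sub>v b)) + ?c \<cdot>\<^sub>v (Jmat n b *\<^sub>v (M *\<^sub>v a + ?c \<cdot>\<^sub>v (M *\<^sub>v b)))"
    using a b M by (intro Jmat_add_smult_mult_vec) auto
  also have "\<dots> = (Jmat n a *\<^sub>v (M *\<^sub>v a) + ?c \<cdot>\<^sub>v (Jmat n a *\<^sub>v (M *\<^sub>v b)))
      + ?c \<cdot>\<^sub>v (Jmat n b *\<^sub>v (M *\<^sub>v a) + ?c \<cdot>\<^sub>v (Jmat n b *\<^sub>v (M *\<^sub>v b)))"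
    using a b M by (simp add: mult_add_distrib_mat_vec[of _ "2*n" "2*n"] mult_mat_vec[of _ "2*n" "2*n"])
  finally show ?thesis using i a b M by (simp add: algebra_simps power2_eq_square)
qed

definition Jmat_dual :: "nat \<Rightarrow> 'a::comm_ring_1 vec \<Rightarrow> 'a mat" where
  "Jmat_dual n z = mat (2*n) (2*n) (\<lambda>(i,j). (Jmat n (unit_vec (2*n) j) *\<^sub>v z) $ i)"

lemma Jmat_dual_carrier [simp]: "Jmat_dual n z \<in> carrier_mat (2*n) (2*n)"
  by (simp add: Jmat_dual_def)

lemma jacobian_hamvf:
  assumes x: "x \<in> carrier_vec (2*n)" and M: "M \<in> carrier_mat (2*n) (2*n)"
  shows "jacobian (2*n) (hamvf n M) x = Jmat n (cvec x) * M + Jmat_dual n (M *\<^sub>v cvec x)"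
proof (rule eq_matI)
  fix i j assume "i < dim_row (Jmat n (cvec x) * M + Jmat_dual n (M *\<^sub>v cvec x))"
    and "j < dim_col (Jmat n (cvec x) * M + Jmat_dual n (M *\<^sub>v cvec x))"
  hence i: "i < 2*n" and j: "j < 2*n" using M by (auto simp: Jmat_dual_def)
  let ?a = "cvec x" and ?b = "unit_vec (2*n) j :: complex vec"
  let ?d1 = "(Jmat n ?a *\<^sub>v (M *\<^sub>v ?b)) $ i + (Jmat n ?b *\<^sub>v (M *\<^sub>v ?a)) $ i"
    and ?d0 = "(Jmat n ?a *\<^sub>v (M *\<^sub>v ?a)) $ i" and ?d2 = "(Jmat n ?b *\<^sub>v (M *\<^sub>v ?b)) $ i"
  have "((\<lambda>t::real. ?d0 + t *\<^sub>R ?d1 + t^2 *\<^sub>R ?d2) has_vector_derivative (0 + 1 *\<^sub>R ?d1 + (2 * 0) *\<^sub>R ?d2)) (at 0)"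
    by (auto intro!: derivative_eq_intros)
  then have "((\<lambda>t. hamvf n M (x + t \<cdot>\<^sub>v unit_vec (2*n) j) $ i) has_vector_derivative ?d1) (at 0)"
    unfolding hamvf_add_smult_unit_vec[OF x M j i] by (simp add: scaleR_conv_of_real)
  then have "jacobian (2*n) (hamvf n M) x $$ (i,j) = ?d1"
    using i j vector_derivative_at by (simp add: jacobian_def)
  also have "Jmat n ?a *\<^sub>v (M *\<^sub>v ?b) = (Jmat n ?a * M) *\<^sub>v ?b"
    using M by (simp add: assoc_mult_mat_vec[of _ "2*n" "2*n" _ "2*n"])
  finally show "jacobian (2*n) (hamvf n M) x $$ (i,j) = (Jmat n (cvec x) * M + Jmat_dual n (M *\<^sub>v cvec x)) $$ (i,j)"
    using i j M by (simp add: Jmat_dual_def)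
qed (use M in \<open>auto simp: jacobian_def Jmat_dual_def\<close>)

lemma sum_mult_unit_vec_index:
  assumes "p < m" "v \<in> carrier_vec m"
  shows "(\<Sum>j<m. v $ j * (unit_vec m j :: 'a::comm_ring_1 vec) $ p) = v $ p"
proof -
  have "(\<Sum>j<m. v $ j * (unit_vec m j :: 'a vec) $ p) = (\<Sum>j<m. if j = p then v $ j else 0)"
    by (rule sum.cong[OF refl]) (use assms in auto)
  also have "\<dots> = v $ p" using assms by (simp add: sum.delta')
  finally show ?thesis .
qed

lemma Jmat_entry_eq_sum:
  assumes v: "v \<in> carrier_vec (2*n)" and i: "i < 2*n" and k: "k < 2*n"
  shows "Jmat n v $$ (i,k) = (\<Sum>j<2*n. v $ j * Jmat n (unit_vec (2*n) j :: 'a::comm_ring_1 vec) $$ (i,k))"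
proof -
  have "0 < n" using i by simp
  then have "(i+k-n) mod n < 2*n" using mod_less_divisor[of n "i+k-n"] by linarith
  then show ?thesis
    using sum_mult_unit_vec_index[OF _ v] by (simp add: Jmat_entry[OF i k] sum_negf)
qed

lemma Jmat_dual_mult_vec:
  assumes z: "z \<in> carrier_vec (2*n)" and v: "v \<in> carrier_vec (2*n)"
  shows "Jmat_dual n z *\<^sub>v v = Jmat n v *\<^sub>v z"
proof (rule eq_vecI)
  fix i assume "i < dim_vec (Jmat n v *\<^sub>v z)"
  hence i: "i < 2*n" by simp
  have "(Jmat_dual n z *\<^sub>v v) $ i = (\<Sum>j<2*n. (\<Sum>k<2*n. Jmat n (unit_vec (2*n) j) $$ (i,k) * z $ k) * v $ j)"
    using i z v by (simp add: Jmat_dual_def scalar_prod_def lessThan_atLeast0)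
  also have "\<dots> = (\<Sum>j<2*n. \<Sum>k<2*n. v $ j * Jmat n (unit_vec (2*n) j) $$ (i,k) * z $ k)"
    by (simp add: sum_distrib_right sum_distrib_left algebra_simps)
  also have "\<dots> = (\<Sum>k<2*n. \<Sum>j<2*n. v $ j * Jmat n (unit_vec (2*n) j) $$ (i,k) * z $ k)"
    by (rule sum.swap)
  also have "\<dots> = (\<Sum>k<2*n. (\<Sum>j<2*n. v $ j * Jmat n (unit_vec (2*n) j) $$ (i,k)) * z $ k)"
    by (simp add: sum_distrib_right)
  also have "\<dots> = (\<Sum>k<2*n. Jmat n v $$ (i,k) * z $ k)"
    by (rule sum.cong[OF refl]) (use Jmat_entry_eq_sum[OF v i] in auto)
  also have "\<dots> = (Jmat n v *\<^sub>v z) $ i"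
    using i z by (simp add: scalar_prod_def lessThan_atLeast0)
  finally show "(Jmat_dual n z *\<^sub>v v) $ i = (Jmat n v *\<^sub>v z) $ i" .
qed (simp add: Jmat_dual_def)


section \<open>Intertwining with B\<close>

lemma eq_mat_by_mult_vecI:
  assumes A: "A \<in> carrier_mat m m" and B: "B \<in> carrier_mat m m"
    and AB: "\<And>v. v \<in> carrier_vec m \<Longrightarrow> A *\<^sub>v v = B *\<^sub>v (v :: 'a::comm_ring_1 vec)"
  shows "A = B"
proof (rule eq_matI)
  fix i j assume "i < dim_row B" "j < dim_col B"
  with B have i: "i < m" and j: "j < m" by auto
  have "A $$ (i,j) = (A *\<^sub>v unit_vec m j) $ i" using A i j by simp
  also have "\<dots> = (B *\<^sub>v unit_vec m j) $ i" using AB[of "unit_vec m j"] by simp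
  also have "\<dots> = B $$ (i,j)" using B i j by simp
  finally show "A $$ (i,j) = B $$ (i,j)" .
qed (use A B in auto)

lemma Jmat_mult_Bmat:
  assumes "0 < n"
  shows "Jmat n v * Bmat n \<alpha> = transpose_mat (Bmat n \<alpha>) * Jmat n v"
  unfolding Bmat_eq_mat_poly transpose_mat_poly[OF Amat_carrier]
  by (rule mat_poly_intertwine) (auto simp: Jmat_mult_Amat[OF assms])

lemma Jmat_mult_Bmat_mult:
  assumes "0 < n" and M: "M \<in> carrier_mat (2*n) (2*n)"
  shows "Jmat n v * (Bmat n \<alpha> * M) = transpose_mat (Bmat n \<alpha>) * (Jmat n v * M)"
  using M by (simp add: assoc_mult_mat[symmetric, of _ "2*n" "2*n" _ "2*n" _ "2*n"] Jmat_mult_Bmat[OF assms(1)])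

lemma Jmat_dual_mult_transpose_Amat:
  assumes n: "0 < n" and z: "z \<in> carrier_vec (2*n)"
  shows "Jmat_dual n z * transpose_mat (Amat n) = transpose_mat (Amat n) * Jmat_dual n z"
proof (rule eq_mat_by_mult_vecI[of _ "2*n"])
  fix v :: "'a vec" assume v: "v \<in> carrier_vec (2*n)"
  let ?At = "transpose_mat (Amat n) :: 'a mat"
  have At: "?At \<in> carrier_mat (2*n) (2*n)" by simp
  have "(Jmat_dual n z * ?At) *\<^sub>v v = Jmat n (?At *\<^sub>v v) *\<^sub>v z"
    using v At by (simp add: assoc_mult_mat_vec[of _ "2*n" "2*n" _ "2*n"]
        Jmat_dual_mult_vec[OF z mult_mat_vec_carrier[OF At v]])
  also have "\<dots> = ?At *\<^sub>v (Jmat n v *\<^sub>v z)"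
    using z At by (simp add: Jmat_transpose_Amat_mult_vec[OF n v] assoc_mult_mat_vec[of _ "2*n" "2*n" _ "2*n"])
  also have "\<dots> = (?At * Jmat_dual n z) *\<^sub>v v"
    using v z At by (simp add: assoc_mult_mat_vec[of _ "2*n" "2*n" _ "2*n"] Jmat_dual_mult_vec)
  finally show "(Jmat_dual n z * ?At) *\<^sub>v v = (?At * Jmat_dual n z) *\<^sub>v v" .
qed (auto intro!: mult_carrier_mat)

lemma Jmat_dual_mult_transpose_Bmat:
  assumes "0 < n" and "z \<in> carrier_vec (2*n)"
  shows "Jmat_dual n z * transpose_mat (Bmat n \<alpha>) = transpose_mat (Bmat n \<alpha>) * Jmat_dual n z"
  unfolding Bmat_eq_mat_poly transpose_mat_poly[OF Amat_carrier]
  by (rule mat_poly_intertwine) (auto simp: Jmat_dual_mult_transpose_Amat[OF assms])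

lemma Jmat_dual_Bmat_mult_vec:
  assumes n: "0 < n" and z: "z \<in> carrier_vec (2*n)"
  shows "Jmat_dual n (Bmat n \<alpha> *\<^sub>v z) = transpose_mat (Bmat n \<alpha>) * Jmat_dual n z"
proof (rule eq_mat_by_mult_vecI[of _ "2*n"])
  fix v :: "complex vec" assume v: "v \<in> carrier_vec (2*n)"
  let ?Bt = "transpose_mat (Bmat n \<alpha>)"
  have Bt: "?Bt \<in> carrier_mat (2*n) (2*n)" by simp
  have "Jmat_dual n (Bmat n \<alpha> *\<^sub>v z) *\<^sub>v v = (Jmat n v * Bmat n \<alpha>) *\<^sub>v z"
    using v z by (simp add: Jmat_dual_mult_vec[OF mult_mat_vec_carrier[OF Bmat_carrier z] v]
        assoc_mult_mat_vec[of _ "2*n" "2*n" _ "2*n"])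
  also have "\<dots> = ?Bt *\<^sub>v (Jmat n v *\<^sub>v z)"
    using z Bt by (simp add: Jmat_mult_Bmat[OF n] assoc_mult_mat_vec[of _ "2*n" "2*n" _ "2*n"])
  also have "\<dots> = (?Bt * Jmat_dual n z) *\<^sub>v v"
    using v z Bt by (simp add: Jmat_dual_mult_vec assoc_mult_mat_vec[of _ "2*n" "2*n" _ "2*n"])
  finally show "Jmat_dual n (Bmat n \<alpha> *\<^sub>v z) *\<^sub>v v = (?Bt * Jmat_dual n z) *\<^sub>v v" .
qed (auto intro!: mult_carrier_mat[of _ "2*n" "2*n"])

lemma admissible_mult_transpose_Bmat:
  assumes adm: "admissible n HH"
  shows "cmat HH * transpose_mat (Bmat n \<alpha>) = Bmat n \<alpha> * cmat HH"
proof -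
  have HH: "HH \<in> carrier_mat (2*n) (2*n)" and AH: "Amat n * HH = HH * transpose_mat (Amat n)"
    using adm by (auto simp: admissible_def)
  have "Amat n * cmat HH = cmat HH * transpose_mat (Amat n)"
    using arg_cong[OF AH, of cmat] HH
    by (simp add: cmat_mult[of _ "2*n" "2*n" _ "2*n"] cmat_transpose cmat_Amat)
  then show ?thesis
    unfolding Bmat_eq_mat_poly transpose_mat_poly[OF Amat_carrier]
    by (intro mat_poly_intertwine) (use HH in \<open>auto simp: cmat_carrier_iff\<close>)
qed

lemma hamvf_Bmat_mult:
  assumes "0 < n" and M: "M \<in> carrier_mat (2*n) (2*n)" and x: "x \<in> carrier_vec (2*n)"
  shows "hamvf n (Bmat n \<alpha> * M) x = transpose_mat (Bmat n \<alpha>) *\<^sub>v hamvf n M x"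
proof -
  have "hamvf n (Bmat n \<alpha> * M) x = (Jmat n (cvec x) * (Bmat n \<alpha> * M)) *\<^sub>v cvec x"
    using M x by (simp add: hamvf_def assoc_mult_mat_vec[of _ "2*n" "2*n" _ "2*n"])
  also have "\<dots> = transpose_mat (Bmat n \<alpha>) *\<^sub>v hamvf n M x"
    using M x by (simp add: Jmat_mult_Bmat_mult[OF assms(1,2)] hamvf_def
        assoc_mult_mat_vec[of _ "2*n" "2*n" _ "2*n"])
  finally show ?thesis .
qed

lemma jacobian_hamvf_Bmat_mult:
  assumes "0 < n" and M: "M \<in> carrier_mat (2*n) (2*n)" and x: "x \<in> carrier_vec (2*n)"
  shows "jacobian (2*n) (hamvf n (Bmat n \<alpha> * M)) x = transpose_mat (Bmat n \<alpha>) * jacobian (2*n) (hamvf n M) x"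
proof -
  let ?Bt = "transpose_mat (Bmat n \<alpha>)" and ?z = "M *\<^sub>v cvec x"
  have z: "?z \<in> carrier_vec (2*n)" using M x by simp
  have "jacobian (2*n) (hamvf n (Bmat n \<alpha> * M)) x =
        Jmat n (cvec x) * (Bmat n \<alpha> * M) + Jmat_dual n ((Bmat n \<alpha> * M) *\<^sub>v cvec x)"
    using M by (intro jacobian_hamvf[OF x]) simp
  also have "\<dots> = ?Bt * (Jmat n (cvec x) * M) + ?Bt * Jmat_dual n ?z"
    using M x by (simp add: Jmat_mult_Bmat_mult[OF assms(1,2)] Jmat_dual_Bmat_mult_vec[OF assms(1) z]
        assoc_mult_mat_vec[of _ "2*n" "2*n" _ "2*n"])
  also have "\<dots> = ?Bt * jacobian (2*n) (hamvf n M) x"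
    unfolding jacobian_hamvf[OF x M] using M by (intro mult_add_distrib_mat[of _ "2*n" "2*n" _ "2*n", symmetric]) auto
  finally show ?thesis .
qed

lemma Jmat_mult_admissible_commute:
  assumes "0 < n" and adm: "admissible n HH"
  shows "Jmat n v * cmat HH * transpose_mat (Bmat n \<alpha>) = transpose_mat (Bmat n \<alpha>) * (Jmat n v * cmat HH)"
proof -
  have H: "cmat HH \<in> carrier_mat (2*n) (2*n)" using adm by (simp add: admissible_def cmat_carrier_iff)
  then show ?thesis
    by (simp add: assoc_mult_mat[of _ "2*n" "2*n" _ "2*n" _ "2*n"] admissible_mult_transpose_Bmat[OF adm]
        Jmat_mult_Bmat_mult[OF assms(1) H])
qed

lemma admissible_mult_Jmat_commute:
  assumes "0 < n" and adm: "admissible n HH"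
  shows "cmat HH * Jmat n v * Bmat n \<alpha> = Bmat n \<alpha> * (cmat HH * Jmat n v)"
proof -
  have H: "cmat HH \<in> carrier_mat (2*n) (2*n)" using adm by (simp add: admissible_def cmat_carrier_iff)
  have "cmat HH * Jmat n v * Bmat n \<alpha> = cmat HH * transpose_mat (Bmat n \<alpha>) * Jmat n v"
    using H by (simp add: assoc_mult_mat[of _ "2*n" "2*n" _ "2*n" _ "2*n"] Jmat_mult_Bmat[OF assms(1)])
  then show ?thesis
    using H by (simp add: admissible_mult_transpose_Bmat[OF adm] assoc_mult_mat[of _ "2*n" "2*n" _ "2*n" _ "2*n"])
qed

lemma jacobian_hamvf_admissible_commute:
  assumes "0 < n" and adm: "admissible n HH" and x: "x \<in> carrier_vec (2*n)"
  shows "jacobian (2*n) (hamvf n (cmat HH)) x * transpose_mat (Bmat n \<alpha>) =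
         transpose_mat (Bmat n \<alpha>) * jacobian (2*n) (hamvf n (cmat HH)) x"
proof -
  have H: "cmat HH \<in> carrier_mat (2*n) (2*n)" using adm by (simp add: admissible_def cmat_carrier_iff)
  then have z: "cmat HH *\<^sub>v cvec x \<in> carrier_vec (2*n)" using x by simp
  let ?Bt = "transpose_mat (Bmat n \<alpha>)" and ?JH = "Jmat n (cvec x) * cmat HH"
    and ?D = "Jmat_dual n (cmat HH *\<^sub>v cvec x)"
  have "(?JH + ?D) * ?Bt = ?JH * ?Bt + ?D * ?Bt"
    using H by (intro add_mult_distrib_mat[of _ "2*n" "2*n" _ _ "2*n"]) auto
  also have "\<dots> = ?Bt * ?JH + ?Bt * ?D"
    by (simp add: Jmat_mult_admissible_commute[OF assms(1,2)] Jmat_dual_mult_transpose_Bmat[OF assms(1) z])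
  also have "\<dots> = ?Bt * (?JH + ?D)"
    using H by (intro mult_add_distrib_mat[of _ "2*n" "2*n" _ "2*n", symmetric]) auto
  finally show ?thesis by (simp add: jacobian_hamvf[OF x H])
qed


section \<open>Cancelling an involution\<close>

lemma involution_cancel_square:
  assumes P: "P \<in> carrier_mat m m" and F: "F \<in> carrier_mat m m"
    and PP: "P * P = 1\<^sub>m m" and FP: "F * P = P * (F :: 'a::comm_ring_1 mat)"
  shows "(P * F) * (P * F) = F * F"
proof -
  have "(P * F) * (P * F) = P * ((F * P) * F)"
    using P F by (simp add: assoc_mult_mat[of _ m m _ m _ m])
  also have "\<dots> = (P * P) * (F * F)"
    unfolding FP using P F by (simp add: assoc_mult_mat[of _ m m _ m _ m])
  also have "\<dots> = F * F"
    using F by (simp add: PP)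
  finally show ?thesis .
qed

lemma involution_cancel_mult_vec:
  assumes P: "P \<in> carrier_mat m m" and F: "F \<in> carrier_mat m m" and v: "v \<in> carrier_vec m"
    and PP: "P * P = 1\<^sub>m m" and FP: "F * P = P * (F :: 'a::comm_ring_1 mat)"
  shows "(P * F) *\<^sub>v (P *\<^sub>v v) = F *\<^sub>v v"
proof -
  have "(P * F) *\<^sub>v (P *\<^sub>v v) = (P * (F * P)) *\<^sub>v v"
    using P F v by (simp add: assoc_mult_mat_vec[of _ m m _ m] assoc_mult_mat[of _ m m _ m _ m])
  also have "\<dots> = ((P * P) * F) *\<^sub>v v"
    unfolding FP using P F by (simp add: assoc_mult_mat[of _ m m _ m _ m])
  also have "\<dots> = F *\<^sub>v v"
    using F by (simp add: PP)
  finally show ?thesis .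
qed

lemma commute_mult_left_commute:
  assumes P: "P \<in> carrier_mat m m" and F: "F \<in> carrier_mat m m"
    and FP: "F * P = P * (F :: 'a::comm_ring_1 mat)"
  shows "F * (P * F) = (P * F) * F"
proof -
  have "F * (P * F) = (F * P) * F" using P F by (simp add: assoc_mult_mat[of _ m m _ m _ m])
  then show ?thesis by (simp add: FP)
qed


theorem mainTheorem17:
  fixes n :: nat and HH :: "real mat" and \<alpha> :: "nat \<Rightarrow> complex" and x :: "real vec"
  assumes n2: "n \<ge> 2"
    and adm: "admissible n HH"
    and B2: "Bmat n \<alpha> * Bmat n \<alpha> = 1\<^sub>m (2*n)"
    and x: "x \<in> carrier_vec (2*n)"
  defines "Hc \<equiv> cmat HH"
    and "KK \<equiv> Bmat n \<alpha> * cmat HH"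
    and "f \<equiv> hamvf n (cmat HH)"
    and "g \<equiv> hamvf n (Bmat n \<alpha> * cmat HH)"
    and "JJ \<equiv> Jmat n (cvec x)"
  shows "jacobian (2*n) g x *\<^sub>v g x = jacobian (2*n) f x *\<^sub>v f x \<and>
         jacobian (2*n) g x * jacobian (2*n) g x = jacobian (2*n) f x * jacobian (2*n) f x \<and>
         JJ * Hc * (JJ * KK) = JJ * KK * (JJ * Hc) \<and>
         JJ * Hc * (JJ * Hc) = JJ * KK * (JJ * KK) \<and>
         Hc * JJ * (Hc * JJ) = KK * JJ * (KK * JJ)"
proof -
  let ?B = "Bmat n \<alpha>" and ?Bt = "transpose_mat (Bmat n \<alpha>)"
  have n: "0 < n" using n2 by simp
  have H: "Hc \<in> carrier_mat (2*n) (2*n)" using adm by (simp add: Hc_def admissible_def cmat_carrier_iff)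
  have BtBt: "?Bt * ?Bt = 1\<^sub>m (2*n)"
    using arg_cong[OF B2, of transpose_mat] by (simp add: transpose_mult[of _ "2*n" "2*n" _ "2*n"])
  have f': "jacobian (2*n) f x \<in> carrier_mat (2*n) (2*n)" by (simp add: jacobian_def)
  have g: "g x = ?Bt *\<^sub>v f x" and g': "jacobian (2*n) g x = ?Bt * jacobian (2*n) f x"
    using hamvf_Bmat_mult[OF n H x] jacobian_hamvf_Bmat_mult[OF n H x] by (simp_all add: f_def g_def Hc_def)
  have f'B: "jacobian (2*n) f x * ?Bt = ?Bt * jacobian (2*n) f x"
    unfolding f_def by (rule jacobian_hamvf_admissible_commute[OF n adm x])
  have JK: "JJ * KK = ?Bt * (JJ * Hc)"
    using Jmat_mult_Bmat_mult[OF n H] by (simp add: JJ_def KK_def Hc_def)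
  have JHB: "JJ * Hc * ?Bt = ?Bt * (JJ * Hc)"
    using Jmat_mult_admissible_commute[OF n adm] by (simp add: JJ_def Hc_def)
  have KJ: "KK * JJ = ?B * (Hc * JJ)"
    using H by (simp add: KK_def Hc_def JJ_def assoc_mult_mat[of _ "2*n" "2*n" _ "2*n" _ "2*n"])
  have HJB: "Hc * JJ * ?B = ?B * (Hc * JJ)"
    using admissible_mult_Jmat_commute[OF n adm] by (simp add: JJ_def Hc_def)
  have fx: "f x \<in> carrier_vec (2*n)"
    unfolding f_def hamvf_def using H x unfolding Hc_def by (intro mult_mat_vec_carrier[OF Jmat_carrier]) simp
  have Bt: "?Bt \<in> carrier_mat (2*n) (2*n)" by simp
  have JH: "JJ * Hc \<in> carrier_mat (2*n) (2*n)" and HJ: "Hc * JJ \<in> carrier_mat (2*n) (2*n)"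
    using H by (simp_all add: JJ_def)
  show ?thesis
    unfolding g g' JK KJ
    by (intro conjI involution_cancel_mult_vec[OF Bt f' fx BtBt f'B] involution_cancel_square[OF Bt f' BtBt f'B]
        commute_mult_left_commute[OF Bt JH JHB] involution_cancel_square[OF Bt JH BtBt JHB, symmetric]
        involution_cancel_square[OF Bmat_carrier HJ B2 HJB, symmetric])
qed

end
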